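(* Let $\Omega\subset\mathbb{R}^n$ be a bounded smooth domain, $0<\alpha<1$, and let $\Lambda$ be the Schauder constant of the Laplacian on $\Omega$. Let $f=f(x,u,\nabla u)$ and let $\{u_i\}\subset C^{2,\alpha}(\Omega)$ be a Dirichlet iteration sequence relative to $f$ starting at $u_0=0$. Suppose there exists a bounded increasing function $\psi:[0,\infty)\to\mathbb{R}$ such that $|f(\cdot,u,\nabla u)|_\alpha\le\psi(|u|_{1,\alpha})$ for all $u\in C^{2,\alpha}(\Omega)$, and that $\Lambda\psi$ has a fixed point. Then $\{u_i\}$ is uniformly bounded in $C^{2,\alpha}(\Omega)$.
   Context: Hölder norms: $[f]_\alpha=\sup_{x\neq y}|f(y)-f(x)|/|y-x|^\alpha$, $|f|_\alpha=|f|_0+[f]_\alpha$, $|f|_{k,\alpha}=\sum_{|\beta|\le k}|\partial^\beta f|_0+\sum_{|\beta|=k}[\partial^\beta f]_\alpha$. The Schauder constant $\Lambda$ is a constant such that for every $g\in C^\alpha(\Omega)$ the solution $v\in C^{2,\alpha}(\Omega)$ of $\Delta v=g$ in $\Omega$, $v=0$ on $\partial\Omega$, satisfies $|v|_{2,\alpha}\le\Lambda|g|_\alpha$. A Dirichlet iteration sequence relative to $f$ starting at $\varphi$ is the sequence defined by $u_0=\varphi$ and, recursively, $u_{i+1}$ the solution of $\Delta u_{i+1}(x)=f(x,u_i(x),\nabla u_i(x))$ in $\Omega$, $u_{i+1}=0$ on $\partial\Omega$. *)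

theory Defs
  imports "HOL-Analysis.Analysis" "HOL-Library.Multiset"
begin

text \<open>Iterated partial derivatives along a list of directions (applied right to left).\<close>
fun dpart :: "'a::euclidean_space list \<Rightarrow> ('a \<Rightarrow> real) \<Rightarrow> 'a \<Rightarrow> real" where
  "dpart [] u = u"
| "dpart (b # bs) u = (\<lambda>x. frechet_derivative (dpart bs u) (at x) b)"

text \<open>Partial derivative for a multi-index, represented as a multiset of basis vectors.\<close>
definition mpart :: "'a::euclidean_space multiset \<Rightarrow> ('a \<Rightarrow> real) \<Rightarrow> 'a \<Rightarrow> real" where
  "mpart \<beta> u = dpart (SOME xs. mset xs = \<beta>) u"

definition mindices :: "nat \<Rightarrow> 'a::euclidean_space multiset set" where
  "mindices k = {\<beta>. set_mset \<beta> \<subseteq> Basis \<and> size \<beta> = k}"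

definition grad :: "('a::euclidean_space \<Rightarrow> real) \<Rightarrow> 'a \<Rightarrow> 'a" where
  "grad u x = (\<Sum>b\<in>Basis. dpart [b] u x *\<^sub>R b)"

definition lap :: "('a::euclidean_space \<Rightarrow> real) \<Rightarrow> 'a \<Rightarrow> real" where
  "lap u x = (\<Sum>b\<in>Basis. dpart [b, b] u x)"

definition supnorm :: "'a::euclidean_space set \<Rightarrow> ('a \<Rightarrow> real) \<Rightarrow> real" where
  "supnorm \<Omega> g = (SUP x\<in>\<Omega>. \<bar>g x\<bar>)"

definition hseminorm :: "'a::euclidean_space set \<Rightarrow> real \<Rightarrow> ('a \<Rightarrow> real) \<Rightarrow> real" where
  "hseminorm \<Omega> \<alpha> g =
     (SUP p\<in>{(x, y). x \<in> \<Omega> \<and> y \<in> \<Omega> \<and> x \<noteq> y}. \<bar>g (snd p) - g (fst p)\<bar> / dist (snd p) (fst p) powr \<alpha>)"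

definition hnorm :: "'a::euclidean_space set \<Rightarrow> nat \<Rightarrow> real \<Rightarrow> ('a \<Rightarrow> real) \<Rightarrow> real" where
  "hnorm \<Omega> k \<alpha> u =
     (\<Sum>j\<le>k. \<Sum>\<beta>\<in>mindices j. supnorm \<Omega> (mpart \<beta> u))
     + (\<Sum>\<beta>\<in>mindices k. hseminorm \<Omega> \<alpha> (mpart \<beta> u))"

definition holder_space :: "'a::euclidean_space set \<Rightarrow> nat \<Rightarrow> real \<Rightarrow> ('a \<Rightarrow> real) \<Rightarrow> bool" where
  "holder_space \<Omega> k \<alpha> u \<longleftrightarrow>
     (\<forall>bs. set bs \<subseteq> Basis \<and> length bs < k \<longrightarrow> (\<forall>x\<in>\<Omega>. dpart bs u differentiable (at x))) \<and>
     (\<forall>bs. set bs \<subseteq> Basis \<and> length bs \<le> k \<longrightarrow>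
         continuous_on \<Omega> (dpart bs u) \<and> bounded (dpart bs u ` \<Omega>)) \<and>
     (\<forall>bs. set bs \<subseteq> Basis \<and> length bs = k \<longrightarrow>
         (\<exists>C. \<forall>x\<in>\<Omega>. \<forall>y\<in>\<Omega>. \<bar>dpart bs u y - dpart bs u x\<bar> \<le> C * dist y x powr \<alpha>))"

definition smooth_fun :: "('a::euclidean_space \<Rightarrow> real) \<Rightarrow> bool" where
  "smooth_fun \<rho> \<longleftrightarrow> (\<forall>bs. set bs \<subseteq> Basis \<longrightarrow> (\<forall>x. dpart bs \<rho> differentiable (at x)))"

definition bounded_smooth_domain :: "'a::euclidean_space set \<Rightarrow> bool" where
  "bounded_smooth_domain \<Omega> \<longleftrightarrow> open \<Omega> \<and> connected \<Omega> \<and> bounded \<Omega> \<and> \<Omega> \<noteq> {} \<and>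
     (\<exists>\<rho>. smooth_fun \<rho> \<and> \<Omega> = {x. \<rho> x < 0} \<and> (\<forall>x. \<rho> x = 0 \<longrightarrow> grad \<rho> x \<noteq> 0))"

definition dirichlet_solution :: "'a::euclidean_space set \<Rightarrow> real \<Rightarrow> ('a \<Rightarrow> real) \<Rightarrow> ('a \<Rightarrow> real) \<Rightarrow> bool" where
  "dirichlet_solution \<Omega> \<alpha> g v \<longleftrightarrow> holder_space \<Omega> 2 \<alpha> v \<and> continuous_on (closure \<Omega>) v \<and>
     (\<forall>x\<in>\<Omega>. lap v x = g x) \<and> (\<forall>x\<in>frontier \<Omega>. v x = 0)"

definition schauder_constant :: "'a::euclidean_space set \<Rightarrow> real \<Rightarrow> real \<Rightarrow> bool" where
  "schauder_constant \<Omega> \<alpha> \<Lambda> \<longleftrightarrow>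
     (\<forall>g v. holder_space \<Omega> 0 \<alpha> g \<longrightarrow> dirichlet_solution \<Omega> \<alpha> g v \<longrightarrow>
        hnorm \<Omega> 2 \<alpha> v \<le> \<Lambda> * hnorm \<Omega> 0 \<alpha> g)"

definition dirichlet_iteration ::
  "'a::euclidean_space set \<Rightarrow> real \<Rightarrow> ('a \<Rightarrow> real \<Rightarrow> 'a \<Rightarrow> real) \<Rightarrow> ('a \<Rightarrow> real) \<Rightarrow> (nat \<Rightarrow> 'a \<Rightarrow> real) \<Rightarrow> bool" where
  "dirichlet_iteration \<Omega> \<alpha> f \<phi> u \<longleftrightarrow> u 0 = \<phi> \<and>
     (\<forall>i. dirichlet_solution \<Omega> \<alpha> (\<lambda>x. f x (u i x) (grad (u i) x)) (u (Suc i)))"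

end

(*
  Since psi is bounded on [0, oo), say by B, every iterate satisfies
  |u (i+1)|_{2,alpha} <= Lambda |f(., u i, grad (u i))|_alpha <= |Lambda| B.  The one subtle point is that
  psi must be applied to a nonnegative argument: the Hoelder norms are suprema, and a supremum
  of an unbounded set of reals is an unspecified value, so 0 <= |u i|_{1,alpha} requires the
  embedding of C^{2,alpha}(Omega) into C^{1,alpha}(Omega).  It holds because a bounded smooth
  domain is locally quasiconvex: nearby points x, y are joined inside Omega by the polygon
  x, x - s n, y - s n, y, where n is the outer normal at a boundary point between them and s is
  comparable to |x - y|.  First derivatives with bounded gradients are therefore Lipschitz, hence
  alpha-Hoelder on the bounded set Omega.
*)
theory Submission
  imports Defs
begin

lemma has_derivative_dpart_sum:
  fixes f :: "'a::euclidean_space \<Rightarrow> real"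
  assumes "f differentiable at x"
  shows "(f has_derivative (\<lambda>h. \<Sum>c\<in>Basis. (h \<bullet> c) * dpart [c] f x)) (at x)"
proof -
  have der: "(f has_derivative frechet_derivative f (at x)) (at x)"
    using assms frechet_derivative_works by blast
  have eq: "frechet_derivative f (at x) = (\<lambda>h. \<Sum>c\<in>Basis. (h \<bullet> c) * dpart [c] f x)"
  proof
    fix h
    show "frechet_derivative f (at x) h = (\<Sum>c\<in>Basis. (h \<bullet> c) * dpart [c] f x)"
      using Linear_Algebra.linear_componentwise[OF has_derivative_linear[OF der], of h 1] by simp
  qed
  show ?thesis
    using der unfolding eq .
qed

lemma segment_increment_le:
  fixes \<rho> :: "'a::real_inner \<Rightarrow> real"
  assumes der: "\<And>z. (\<rho> has_derivative (\<lambda>h. h \<bullet> G z)) (at z)"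
    and bound: "\<And>z. z \<in> closed_segment a b \<Longrightarrow> G z \<bullet> (b - a) \<le> c"
  shows "\<rho> b \<le> \<rho> a + c"
proof -
  define \<gamma> where "\<gamma> t = a + t *\<^sub>R (b - a)" for t :: real
  define \<phi> where "\<phi> t = \<rho> (\<gamma> t)" for t
  have deriv: "(\<phi> has_real_derivative G (\<gamma> t) \<bullet> (b - a)) (at t)" for t
  proof -
    have "(\<gamma> has_derivative (\<lambda>s. s *\<^sub>R (b - a))) (at t)"
      unfolding \<gamma>_def by (auto intro!: derivative_eq_intros)
    from has_derivative_compose[OF this der]
    show ?thesis
      unfolding has_field_derivative_def \<phi>_def by (simp add: inner_commute mult_commute_abs)
  qed
  obtain t where t: "0 < t" "t < 1" "\<phi> 1 - \<phi> 0 = (1 - 0) * (G (\<gamma> t) \<bullet> (b - a))"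
    using MVT2[of 0 1 \<phi> "\<lambda>t. G (\<gamma> t) \<bullet> (b - a)"] deriv by auto
  have "\<gamma> t = (1 - t) *\<^sub>R a + t *\<^sub>R b"
    unfolding \<gamma>_def by (simp add: algebra_simps)
  with t have "\<gamma> t \<in> closed_segment a b"
    unfolding in_segment by (intro exI[of _ t]) auto
  then have "G (\<gamma> t) \<bullet> (b - a) \<le> c" by (rule bound)
  with t show ?thesis unfolding \<phi>_def \<gamma>_def by simp
qed

lemma inner_sgn_ge_norm_diff:
  fixes u v :: "'a::real_inner"
  shows "norm v - norm (u - v) \<le> u \<bullet> sgn v"
proof (cases "v = 0")
  case False
  have "u \<bullet> sgn v = norm v + (u - v) \<bullet> sgn v"
    using False by (simp add: sgn_div_norm inner_diff_left dot_square_norm power2_eq_square field_simps)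
  moreover have "\<bar>(u - v) \<bullet> sgn v\<bar> \<le> norm (u - v)"
    using Cauchy_Schwarz_ineq2[of "u - v" "sgn v"] False by (simp add: norm_sgn)
  ultimately show ?thesis by linarith
qed simp

lemma nonvanishing_field_uniformly_transversal:
  fixes G :: "'a::euclidean_space \<Rightarrow> 'a"
  assumes cont: "continuous_on UNIV G" and K: "compact K" and nz: "\<And>p. p \<in> K \<Longrightarrow> G p \<noteq> 0"
  obtains m R M where "0 < m" "0 < R" "0 \<le> M"
    and "\<And>p z. p \<in> K \<Longrightarrow> z \<in> ball p R \<Longrightarrow> m \<le> G z \<bullet> sgn (G p) \<and> norm (G z) \<le> M"
proof (cases "K = {}")
  case True
  then show ?thesis using that[of 1 1 0] by simp
next
  case False
  obtain p0 where p0: "p0 \<in> K" "\<And>p. p \<in> K \<Longrightarrow> norm (G p0) \<le> norm (G p)"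
    using continuous_attains_inf[OF K False, of "\<lambda>p. norm (G p)"] cont
    by (metis continuous_on_norm continuous_on_subset subset_UNIV)
  define m where "m = norm (G p0) / 2"
  have m: "0 < m" unfolding m_def using nz[OF p0(1)] by simp
  obtain r where r: "\<And>p. p \<in> K \<Longrightarrow> norm p \<le> r"
    using compact_imp_bounded[OF K] unfolding bounded_iff by blast
  define T where "T = cball (0::'a) (r + 1)"
  have "uniformly_continuous_on T G"
    unfolding T_def by (rule compact_uniformly_continuous[OF continuous_on_subset[OF cont]]) auto
  then obtain R0 where R0: "0 < R0" "\<And>z p. z \<in> T \<Longrightarrow> p \<in> T \<Longrightarrow> dist z p < R0 \<Longrightarrow> dist (G z) (G p) < m"
    unfolding uniformly_continuous_on_def using m by metis
  obtain M where M: "0 \<le> M" "\<And>z. z \<in> T \<Longrightarrow> norm (G z) \<le> M"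
  proof -
    have "bounded (G ` T)"
      unfolding T_def by (intro compact_imp_bounded compact_continuous_image continuous_on_subset[OF cont]) auto
    then obtain M where "0 < M" "\<And>z. z \<in> T \<Longrightarrow> norm (G z) \<le> M"
      unfolding bounded_pos by auto
    then show ?thesis using that[of M] by simp
  qed
  define R where "R = min R0 1"
  show ?thesis
  proof (rule that[of m R M])
    show "0 < R" using R0 unfolding R_def by simp
    fix p z assume p: "p \<in> K" and z: "z \<in> ball p R"
    have "norm p \<le> r" using r[OF p] .
    moreover have "norm (z - p) < 1" using z unfolding R_def by (simp add: dist_norm norm_minus_commute)
    ultimately have zT: "z \<in> T" and pT: "p \<in> T"
      unfolding T_def using norm_triangle_sub[of z p] by auto
    have "norm (G z - G p) < m"
      using R0(2)[OF zT pT] z unfolding R_def by (simp add: dist_norm norm_minus_commute)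
    moreover have "2 * m \<le> norm (G p)" using p0(2)[OF p] unfolding m_def by simp
    ultimately show "m \<le> G z \<bullet> sgn (G p) \<and> norm (G z) \<le> M"
      using inner_sgn_ge_norm_diff[of "G p" "G z"] M(2)[OF zT] by linarith
  qed (use m M in auto)
qed

lemma segment_descent_stays_in_sublevel:
  fixes \<rho> :: "'a::real_inner \<Rightarrow> real"
  assumes der: "\<And>z. (\<rho> has_derivative (\<lambda>h. h \<bullet> G z)) (at z)"
    and B: "convex B" and tr: "\<And>z. z \<in> B \<Longrightarrow> 0 \<le> G z \<bullet> n" and "0 \<le> s"
    and a: "\<rho> a < c" "a \<in> B" "a - s *\<^sub>R n \<in> B"
  shows "closed_segment a (a - s *\<^sub>R n) \<subseteq> {z. \<rho> z < c}"
proof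
  fix w assume w: "w \<in> closed_segment a (a - s *\<^sub>R n)"
  then obtain t where t: "0 \<le> t" "t \<le> 1" "w - a = - (t * s) *\<^sub>R n"
    unfolding in_segment by (auto simp: algebra_simps)
  have "closed_segment a w \<subseteq> B"
    using closed_segment_subset[OF a(2) closed_segment_subset[OF a(2,3) B, THEN subsetD, OF w] B] .
  then have "G z \<bullet> (w - a) \<le> 0" if "z \<in> closed_segment a w" for z
    using tr[of z] that t \<open>0 \<le> s\<close> unfolding t(3) by auto
  then have "\<rho> w \<le> \<rho> a" using segment_increment_le[OF der] by fastforce
  with a show "w \<in> {z. \<rho> z < c}" by simp
qed

lemma sublevel_three_segment_detour:
  fixes \<rho> :: "'a::real_inner \<Rightarrow> real"
  assumes der: "\<And>z. (\<rho> has_derivative (\<lambda>h. h \<bullet> G z)) (at z)"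
    and B: "convex B" and tr: "\<And>z. z \<in> B \<Longrightarrow> m \<le> G z \<bullet> n \<and> norm (G z) \<le> M"
    and m: "0 < m" and s: "s = M * dist x y / m"
    and x: "\<rho> x < 0" "x \<in> B" "x - s *\<^sub>R n \<in> B"
    and y: "\<rho> y < 0" "y \<in> B" "y - s *\<^sub>R n \<in> B"
  shows "closed_segment x (x - s *\<^sub>R n) \<subseteq> {z. \<rho> z < 0}"
    and "closed_segment (x - s *\<^sub>R n) (y - s *\<^sub>R n) \<subseteq> {z. \<rho> z < 0}"
    and "closed_segment (y - s *\<^sub>R n) y \<subseteq> {z. \<rho> z < 0}"
proof -
  have "0 \<le> M" using tr[OF x(2)] norm_ge_zero order_trans by blast
  then have s0: "0 \<le> s" unfolding s using m by simp
  have inward: "0 \<le> G z \<bullet> n" if "z \<in> B" for z using tr[OF that] m by linarith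
  have descent: "closed_segment a (a - s *\<^sub>R n) \<subseteq> {z. \<rho> z < 0}"
    if "\<rho> a < 0" "a \<in> B" "a - s *\<^sub>R n \<in> B" for a
    by (rule segment_descent_stays_in_sublevel[OF der B _ s0 that]) (rule inward)
  show "closed_segment x (x - s *\<^sub>R n) \<subseteq> {z. \<rho> z < 0}" using descent x by blast
  show "closed_segment (y - s *\<^sub>R n) y \<subseteq> {z. \<rho> z < 0}"
    using descent[OF y] by (simp add: closed_segment_commute)
  have xB: "closed_segment x (x - s *\<^sub>R n) \<subseteq> B"
    and xyB: "closed_segment (x - s *\<^sub>R n) (y - s *\<^sub>R n) \<subseteq> B"
    using closed_segment_subset x(2,3) y(3) B by auto
  \<comment> \<open>The first leg lowers \<open>\<rho>\<close> by at least \<open>s * m = M * dist x y\<close>,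
    the most that \<open>\<rho>\<close> can rise along the middle leg.\<close>
  have "G z \<bullet> ((x - s *\<^sub>R n) - x) \<le> - (s * m)" if "z \<in> closed_segment x (x - s *\<^sub>R n)" for z
    using tr[OF xB[THEN subsetD, OF that]] s0 by (simp add: mult_left_mono)
  then have bottom: "\<rho> (x - s *\<^sub>R n) \<le> \<rho> x - s * m"
    using segment_increment_le[OF der] by fastforce
  show "closed_segment (x - s *\<^sub>R n) (y - s *\<^sub>R n) \<subseteq> {z. \<rho> z < 0}"
  proof
    fix w assume w: "w \<in> closed_segment (x - s *\<^sub>R n) (y - s *\<^sub>R n)"
    have "closed_segment (x - s *\<^sub>R n) w \<subseteq> B"
      using closed_segment_subset[OF x(3) xyB[THEN subsetD, OF w] B] .
    moreover have "norm (w - (x - s *\<^sub>R n)) \<le> dist x y"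
      using segment_bound1[OF w] by (simp add: dist_norm norm_minus_commute)
    ultimately have "G z \<bullet> (w - (x - s *\<^sub>R n)) \<le> M * dist x y"
      if "z \<in> closed_segment (x - s *\<^sub>R n) w" for z
      using tr[of z] that norm_cauchy_schwarz[of "G z"]
      by (meson mult_mono' norm_ge_zero order_trans subsetD)
    then have "\<rho> w \<le> \<rho> (x - s *\<^sub>R n) + M * dist x y"
      using segment_increment_le[OF der] by fastforce
    moreover have "s * m = M * dist x y" unfolding s using m by simp
    ultimately show "w \<in> {z. \<rho> z < 0}" using bottom x(1) by simp
  qed
qed

lemma sublevel_detour_near_point:
  fixes \<rho> :: "'a::euclidean_space \<Rightarrow> real"
  assumes der: "\<And>z. (\<rho> has_derivative (\<lambda>h. h \<bullet> G z)) (at z)"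
    and tr: "\<And>z. z \<in> ball p R \<Longrightarrow> m \<le> G z \<bullet> n \<and> norm (G z) \<le> M"
    and m: "0 < m" and M: "0 \<le> M" and n: "norm n = 1"
    and x: "\<rho> x < 0" and y: "\<rho> y < 0" and p: "p \<in> closed_segment x y"
    and close: "dist x y * (1 + M / m) < R"
  shows "\<exists>z1 z2. closed_segment x z1 \<subseteq> {z. \<rho> z < 0} \<and> closed_segment z1 z2 \<subseteq> {z. \<rho> z < 0} \<and>
           closed_segment z2 y \<subseteq> {z. \<rho> z < 0} \<and>
           dist x z1 + dist z1 z2 + dist z2 y = (1 + 2 * M / m) * dist x y"
proof -
  define s where "s = M * dist x y / m"
  have s: "0 \<le> s" unfolding s_def using m M by simp
  have "dist x y + s < R" using close unfolding s_def by (simp add: algebra_simps)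
  moreover have "dist p x \<le> dist x y" "dist p y \<le> dist x y"
    using dist_in_closed_segment[OF p] by (auto simp: dist_commute)
  moreover have "dist p (a - s *\<^sub>R n) \<le> dist p a + s" for a
    using dist_triangle[of p "a - s *\<^sub>R n" a] n s by (simp add: dist_norm)
  ultimately have inB: "x \<in> ball p R" "y \<in> ball p R" "x - s *\<^sub>R n \<in> ball p R" "y - s *\<^sub>R n \<in> ball p R"
    using s unfolding mem_ball by (metis add_increasing2 le_less_trans add_right_mono)+
  have "dist x (x - s *\<^sub>R n) + dist (x - s *\<^sub>R n) (y - s *\<^sub>R n) + dist (y - s *\<^sub>R n) y
      = 2 * s + dist x y"
    using n s by (simp add: dist_norm)
  also have "\<dots> = (1 + 2 * M / m) * dist x y" unfolding s_def using m by (simp add: field_simps)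
  finally show ?thesis
    using sublevel_three_segment_detour[OF der convex_ball tr m s_def x inB(1,3) y inB(2,4)] by blast
qed

definition locally_quasiconvex :: "'a::real_normed_vector set \<Rightarrow> bool" where
  "locally_quasiconvex S \<longleftrightarrow> (\<exists>\<delta>>0. \<exists>Q. \<forall>x\<in>S. \<forall>y\<in>S. dist x y < \<delta> \<longrightarrow>
     (\<exists>z1 z2. closed_segment x z1 \<subseteq> S \<and> closed_segment z1 z2 \<subseteq> S \<and> closed_segment z2 y \<subseteq> S \<and>
        dist x z1 + dist z1 z2 + dist z2 y \<le> Q * dist x y))"

lemma locally_quasiconvex_sublevel_set:
  fixes \<rho> :: "'a::euclidean_space \<Rightarrow> real"
  assumes der: "\<And>z. (\<rho> has_derivative (\<lambda>h. h \<bullet> G z)) (at z)" and cont: "continuous_on UNIV G"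
    and bnd: "bounded {x. \<rho> x < 0}" and nz: "\<And>x. \<rho> x = 0 \<Longrightarrow> G x \<noteq> 0"
  shows "locally_quasiconvex {x. \<rho> x < 0}"
proof -
  define \<Omega> where "\<Omega> = {x. \<rho> x < 0}"
  have \<rho>: "continuous_on UNIV \<rho>"
    by (intro continuous_at_imp_continuous_on ballI has_derivative_continuous[OF der])
  have "open \<Omega>"
    unfolding \<Omega>_def using open_Collect_less[OF \<rho> continuous_on_const] by simp
  have "closure \<Omega> \<subseteq> {x. \<rho> x \<le> 0}"
    using closed_Collect_le[OF \<rho> continuous_on_const] by (intro closure_minimal) (auto simp: \<Omega>_def)
  then have zero: "\<rho> p = 0" if "p \<in> frontier \<Omega>" for p
    using that unfolding frontier_def interior_open[OF \<open>open \<Omega>\<close>] by (force simp: \<Omega>_def)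
  have "compact (frontier \<Omega>)"
    using bnd unfolding \<Omega>_def by (rule compact_frontier_bounded)
  obtain m R M where m: "0 < m" and R: "0 < R" and M: "0 \<le> M"
    and tr: "\<And>p z. p \<in> frontier \<Omega> \<Longrightarrow> z \<in> ball p R \<Longrightarrow> m \<le> G z \<bullet> sgn (G p) \<and> norm (G z) \<le> M"
    using nonvanishing_field_uniformly_transversal[OF cont \<open>compact (frontier \<Omega>)\<close> nz[OF zero]] by blast
  define Q where "Q = 1 + 2 * M / m"
  have "\<exists>z1 z2. closed_segment x z1 \<subseteq> \<Omega> \<and> closed_segment z1 z2 \<subseteq> \<Omega> \<and> closed_segment z2 y \<subseteq> \<Omega> \<and>
          dist x z1 + dist z1 z2 + dist z2 y \<le> Q * dist x y"
    if x: "x \<in> \<Omega>" and y: "y \<in> \<Omega>" and xy: "dist x y < R / (1 + M / m)" for x y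
  proof (cases "closed_segment x y \<subseteq> \<Omega>")
    case True
    have "1 \<le> Q" unfolding Q_def using m M by simp
    then have "dist x y \<le> Q * dist x y" by (simp add: mult_le_cancel_right1)
    with True x y show ?thesis by (intro exI[of _ x] exI[of _ y]) (simp add: dist_commute)
  next
    case False
    have "closed_segment x y \<inter> frontier \<Omega> \<noteq> {}"
      by (rule connected_Int_frontier) (use False x in auto)
    then obtain p where p: "p \<in> closed_segment x y" "p \<in> frontier \<Omega>" by blast
    have "norm (sgn (G p)) = 1" using nz[OF zero[OF p(2)]] by (simp add: norm_sgn)
    moreover have "dist x y * (1 + M / m) < R"
      using xy m M by (simp add: pos_less_divide_eq add_pos_nonneg)
    moreover have "\<rho> x < 0" "\<rho> y < 0" using x y by (simp_all add: \<Omega>_def)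
    ultimately show ?thesis
      using sublevel_detour_near_point[OF der tr[OF p(2)] m M _ _ _ p(1)]
      unfolding \<Omega>_def Q_def by fastforce
  qed
  moreover have "0 < R / (1 + M / m)" using R m M by (simp add: add_pos_nonneg)
  ultimately show ?thesis unfolding locally_quasiconvex_def \<Omega>_def by blast
qed

lemma bounded_smooth_domain_locally_quasiconvex:
  assumes "bounded_smooth_domain \<Omega>"
  shows "locally_quasiconvex \<Omega>"
proof -
  obtain \<rho> where \<rho>: "smooth_fun \<rho>" "\<Omega> = {x. \<rho> x < 0}" "\<And>x. \<rho> x = 0 \<Longrightarrow> grad \<rho> x \<noteq> 0"
    and "bounded \<Omega>"
    using assms unfolding bounded_smooth_domain_def by blast
  have diff: "dpart bs \<rho> differentiable at z" if "set bs \<subseteq> Basis" for bs z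
    using \<rho>(1) that unfolding smooth_fun_def by blast
  have "(\<rho> has_derivative (\<lambda>h. h \<bullet> grad \<rho> z)) (at z)" for z
  proof -
    have eq: "(\<lambda>h. \<Sum>c\<in>Basis. (h \<bullet> c) * dpart [c] \<rho> z) = (\<lambda>h. h \<bullet> grad \<rho> z)"
      by (simp add: grad_def inner_sum_right mult.commute)
    have "\<rho> differentiable at z" using diff[of "[]"] by simp
    from has_derivative_dpart_sum[OF this] show ?thesis unfolding eq .
  qed
  moreover have "continuous_on UNIV (grad \<rho>)"
    unfolding grad_def[abs_def] using diff
    by (intro continuous_on_sum continuous_on_scaleR continuous_on_const continuous_at_imp_continuous_on
        ballI differentiable_imp_continuous_within) (auto simp del: dpart.simps)
  ultimately show ?thesis
    using locally_quasiconvex_sublevel_set \<rho>(3) \<open>bounded \<Omega>\<close> unfolding \<rho>(2) by blast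
qed

lemma locally_quasiconvex_lipschitz:
  fixes g :: "'a::real_normed_vector \<Rightarrow> 'b::real_normed_vector"
  assumes "locally_quasiconvex \<Omega>" and bnd: "bounded (g ` \<Omega>)"
    and der: "\<And>z. z \<in> \<Omega> \<Longrightarrow> (g has_derivative g' z) (at z)"
    and K: "0 \<le> K" "\<And>z. z \<in> \<Omega> \<Longrightarrow> onorm (g' z) \<le> K"
  shows "\<exists>L. \<forall>x\<in>\<Omega>. \<forall>y\<in>\<Omega>. dist (g x) (g y) \<le> L * dist x y"
proof -
  obtain \<delta> Q where \<delta>: "0 < \<delta>" and Q: "\<And>x y. x \<in> \<Omega> \<Longrightarrow> y \<in> \<Omega> \<Longrightarrow> dist x y < \<delta> \<Longrightarrow>
     \<exists>z1 z2. closed_segment x z1 \<subseteq> \<Omega> \<and> closed_segment z1 z2 \<subseteq> \<Omega> \<and> closed_segment z2 y \<subseteq> \<Omega> \<and>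
        dist x z1 + dist z1 z2 + dist z2 y \<le> Q * dist x y"
    using assms(1) unfolding locally_quasiconvex_def by metis
  obtain S where S0: "0 < S" and S: "\<And>x. x \<in> \<Omega> \<Longrightarrow> norm (g x) \<le> S"
    using bnd unfolding bounded_pos by auto
  have segment: "dist (g a) (g b) \<le> K * dist a b" if "closed_segment a b \<subseteq> \<Omega>" for a b
  proof -
    have "norm (g a - g b) \<le> K * norm (a - b)"
      by (rule differentiable_bound[OF convex_closed_segment])
        (use that der K(2) in \<open>auto intro: has_derivative_at_withinI\<close>)
    then show ?thesis by (simp add: dist_norm)
  qed
  have "dist (g x) (g y) \<le> (K * \<bar>Q\<bar> + 2 * S / \<delta>) * dist x y"
    if x: "x \<in> \<Omega>" and y: "y \<in> \<Omega>" for x y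
  proof (cases "dist x y < \<delta>")
    case True
    then obtain z1 z2 where z: "closed_segment x z1 \<subseteq> \<Omega>" "closed_segment z1 z2 \<subseteq> \<Omega>"
      "closed_segment z2 y \<subseteq> \<Omega>" "dist x z1 + dist z1 z2 + dist z2 y \<le> Q * dist x y"
      using Q[OF x y] by blast
    have "dist (g x) (g y) \<le> dist (g x) (g z1) + dist (g z1) (g z2) + dist (g z2) (g y)"
      by (meson add_mono dist_triangle order_trans order_refl)
    also have "\<dots> \<le> K * (dist x z1 + dist z1 z2 + dist z2 y)"
      using segment[OF z(1)] segment[OF z(2)] segment[OF z(3)] by (simp add: distrib_left)
    also have "\<dots> \<le> K * (\<bar>Q\<bar> * dist x y)"
      using z(4) K(1) mult_right_mono[OF abs_ge_self zero_le_dist, of Q x y]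
      by (intro mult_left_mono) auto
    also have "\<dots> \<le> (K * \<bar>Q\<bar> + 2 * S / \<delta>) * dist x y"
      using S0 \<delta> by (simp add: algebra_simps)
    finally show ?thesis .
  next
    case False
    have "dist (g x) (g y) \<le> 2 * S"
      using S[OF x] S[OF y] norm_triangle_ineq4[of "g x" "g y"] by (simp add: dist_norm)
    also have "\<dots> \<le> 2 * S / \<delta> * dist x y"
      using False \<delta> S0 by (simp add: field_simps)
    also have "\<dots> \<le> (K * \<bar>Q\<bar> + 2 * S / \<delta>) * dist x y"
      using K(1) by (simp add: algebra_simps)
    finally show ?thesis .
  qed
  then show ?thesis by blast
qed

lemma lipschitz_imp_holder_on_bounded:
  fixes g :: "'a::metric_space \<Rightarrow> 'b::metric_space"
  assumes "bounded \<Omega>" "0 \<le> \<alpha>" "\<alpha> \<le> 1"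
    and L: "\<And>x y. x \<in> \<Omega> \<Longrightarrow> y \<in> \<Omega> \<Longrightarrow> dist (g x) (g y) \<le> L * dist x y"
  shows "\<exists>C. \<forall>x\<in>\<Omega>. \<forall>y\<in>\<Omega>. dist (g x) (g y) \<le> C * dist x y powr \<alpha>"
proof -
  obtain D where D: "\<And>x y. x \<in> \<Omega> \<Longrightarrow> y \<in> \<Omega> \<Longrightarrow> dist x y \<le> D"
    using assms(1) unfolding bounded_two_points by blast
  have "dist (g x) (g y) \<le> (max L 0 * D powr (1 - \<alpha>)) * dist x y powr \<alpha>"
    if "x \<in> \<Omega>" "y \<in> \<Omega>" for x y
  proof (cases "x = y")
    case False
    then have "0 < dist x y" by simp
    have "dist (g x) (g y) \<le> max L 0 * dist x y"
      using L[OF that] by (meson max.cobounded1 mult_right_mono order_trans zero_le_dist)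
    also have "dist x y = dist x y powr (1 - \<alpha>) * dist x y powr \<alpha>"
      using \<open>0 < dist x y\<close> by (simp add: powr_add[symmetric])
    also have "max L 0 * (dist x y powr (1 - \<alpha>) * dist x y powr \<alpha>)
        \<le> max L 0 * (D powr (1 - \<alpha>) * dist x y powr \<alpha>)"
      using D[OF that] assms(3) by (intro mult_left_mono mult_right_mono powr_mono2) auto
    finally show ?thesis by (simp add: mult.assoc)
  qed simp
  then show ?thesis by blast
qed

lemma onorm_sum_Basis_le:
  fixes a :: "'a::euclidean_space \<Rightarrow> real"
  shows "onorm (\<lambda>h. \<Sum>c\<in>Basis. (h \<bullet> c) * a c) \<le> (\<Sum>c\<in>Basis. \<bar>a c\<bar>)"
proof (rule onorm_le)
  fix h :: 'a
  have "norm (\<Sum>c\<in>Basis. (h \<bullet> c) * a c) \<le> (\<Sum>c\<in>Basis. \<bar>h \<bullet> c\<bar> * \<bar>a c\<bar>)"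
    using sum_abs[of "\<lambda>c. (h \<bullet> c) * a c"] by (simp add: abs_mult)
  also have "\<dots> \<le> (\<Sum>c\<in>Basis. norm h * \<bar>a c\<bar>)"
    by (intro sum_mono mult_right_mono Basis_le_norm) auto
  finally show "norm (\<Sum>c\<in>Basis. (h \<bullet> c) * a c) \<le> (\<Sum>c\<in>Basis. \<bar>a c\<bar>) * norm h"
    by (simp add: sum_distrib_left mult.commute)
qed

lemma bounded_partials_imp_lipschitz:
  fixes g :: "'a::euclidean_space \<Rightarrow> real"
  assumes "locally_quasiconvex \<Omega>" "bounded (g ` \<Omega>)"
    and diff: "\<And>z. z \<in> \<Omega> \<Longrightarrow> g differentiable at z"
    and partials: "\<And>c. c \<in> Basis \<Longrightarrow> bounded (dpart [c] g ` \<Omega>)"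
  shows "\<exists>L. \<forall>x\<in>\<Omega>. \<forall>y\<in>\<Omega>. dist (g x) (g y) \<le> L * dist x y"
proof -
  have "\<forall>c\<in>Basis. \<exists>k. \<forall>z\<in>\<Omega>. \<bar>dpart [c] g z\<bar> \<le> k"
    using partials unfolding bounded_iff by (simp del: dpart.simps)
  then obtain k where k: "\<And>c z. c \<in> Basis \<Longrightarrow> z \<in> \<Omega> \<Longrightarrow> \<bar>dpart [c] g z\<bar> \<le> k c"
    by metis
  have "onorm (\<lambda>h. \<Sum>c\<in>Basis. (h \<bullet> c) * dpart [c] g z) \<le> (\<Sum>c\<in>Basis. \<bar>k c\<bar>)"
    if "z \<in> \<Omega>" for z
  proof -
    have "onorm (\<lambda>h. \<Sum>c\<in>Basis. (h \<bullet> c) * dpart [c] g z) \<le> (\<Sum>c\<in>Basis. \<bar>dpart [c] g z\<bar>)"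
      by (rule onorm_sum_Basis_le)
    also have "\<dots> \<le> (\<Sum>c\<in>Basis. \<bar>k c\<bar>)"
      using k[OF _ that] by (intro sum_mono) (meson abs_ge_self order_trans)
    finally show ?thesis .
  qed
  then show ?thesis
    using locally_quasiconvex_lipschitz[OF assms(1,2) has_derivative_dpart_sum[OF diff],
        where K = "\<Sum>c\<in>Basis. \<bar>k c\<bar>"]
    by (simp add: sum_nonneg del: dpart.simps)
qed

lemma holder_space_2_imp_1:
  fixes w :: "'a::euclidean_space \<Rightarrow> real"
  assumes "locally_quasiconvex \<Omega>" "bounded \<Omega>" "0 \<le> \<alpha>" "\<alpha> \<le> 1" and w: "holder_space \<Omega> 2 \<alpha> w"
  shows "holder_space \<Omega> 1 \<alpha> w"
proof -
  have "\<exists>C. \<forall>x\<in>\<Omega>. \<forall>y\<in>\<Omega>. \<bar>dpart [b] w y - dpart [b] w x\<bar> \<le> C * dist y x powr \<alpha>"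
    if b: "b \<in> Basis" for b
  proof -
    have diff: "\<forall>x\<in>\<Omega>. dpart bs w differentiable at x"
      and bnd: "bounded (dpart bs w ` \<Omega>)" if "set bs \<subseteq> Basis" "length bs < 2" for bs
      using w that unfolding holder_space_def by auto
    have "\<exists>L. \<forall>x\<in>\<Omega>. \<forall>y\<in>\<Omega>. dist (dpart [b] w x) (dpart [b] w y) \<le> L * dist x y"
    proof (rule bounded_partials_imp_lipschitz[OF assms(1)])
      show "bounded (dpart [b] w ` \<Omega>)" using bnd[of "[b]"] b by simp
      show "dpart [b] w differentiable at z" if "z \<in> \<Omega>" for z
        using diff[of "[b]"] b that by simp
      show "bounded (dpart [c] (dpart [b] w) ` \<Omega>)" if "c \<in> Basis" for c
        using w b that unfolding holder_space_def by (auto dest!: spec[of _ "[c, b]"])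
    qed
    then obtain C where "\<forall>x\<in>\<Omega>. \<forall>y\<in>\<Omega>. dist (dpart [b] w x) (dpart [b] w y) \<le> C * dist x y powr \<alpha>"
      using lipschitz_imp_holder_on_bounded[OF assms(2-4)] by metis
    then show ?thesis
      by (intro exI[of _ C]) (simp add: dist_real_def abs_minus_commute dist_commute del: dpart.simps)
  qed
  then show ?thesis
    using w unfolding holder_space_def
    by (auto simp: length_Suc_conv simp del: dpart.simps)
qed

lemma dpart_zero [simp]: "dpart bs (\<lambda>x::'a::euclidean_space. 0) = (\<lambda>x. 0)"
  by (induction bs) (simp_all add: frechet_derivative_const)

lemma holder_space_zero: "holder_space \<Omega> k \<alpha> (\<lambda>x::'a::euclidean_space. 0)"
  unfolding holder_space_def by (auto intro!: exI[of _ 0] intro: bounded_subset[of "{0}"])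

lemma mpart_eq_dpart:
  assumes "\<beta> \<in> mindices j"
  obtains bs where "mpart \<beta> w = dpart bs w" "set bs \<subseteq> Basis" "length bs = j"
proof
  define bs where "bs = (SOME bs. mset bs = \<beta>)"
  have "mset bs = \<beta>" unfolding bs_def by (rule someI_ex[OF ex_mset])
  then show "set bs \<subseteq> Basis" "length bs = j"
    using assms unfolding mindices_def by (auto dest: arg_cong[of _ _ set_mset] arg_cong[of _ _ size])
  show "mpart \<beta> w = dpart bs w" unfolding mpart_def bs_def ..
qed

lemma supnorm_nonneg:
  assumes "bounded (g ` \<Omega>)" "\<Omega> \<noteq> {}"
  shows "0 \<le> supnorm \<Omega> g"
proof -
  obtain x where "x \<in> \<Omega>" using assms(2) by blast
  have "bdd_above ((\<lambda>x. \<bar>g x\<bar>) ` \<Omega>)"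
    using assms(1) unfolding bounded_iff by (auto intro: bdd_aboveI2)
  then show ?thesis unfolding supnorm_def by (rule cSUP_upper2[OF _ \<open>x \<in> \<Omega>\<close>]) simp
qed

lemma hseminorm_nonneg:
  assumes "\<And>x y. x \<in> \<Omega> \<Longrightarrow> y \<in> \<Omega> \<Longrightarrow> \<bar>g y - g x\<bar> \<le> C * dist y x powr \<alpha>"
    and "x0 \<in> \<Omega>" "x1 \<in> \<Omega>" "x0 \<noteq> x1"
  shows "0 \<le> hseminorm \<Omega> \<alpha> g"
proof -
  let ?P = "{(x, y). x \<in> \<Omega> \<and> y \<in> \<Omega> \<and> x \<noteq> y}"
  have "\<bar>g (snd p) - g (fst p)\<bar> / dist (snd p) (fst p) powr \<alpha> \<le> C" if "p \<in> ?P" for p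
    using assms(1)[of "fst p" "snd p"] that by (auto simp: divide_le_eq)
  then have "bdd_above ((\<lambda>p. \<bar>g (snd p) - g (fst p)\<bar> / dist (snd p) (fst p) powr \<alpha>) ` ?P)"
    by (rule bdd_aboveI2)
  then show ?thesis
    unfolding hseminorm_def by (rule cSUP_upper2[of _ _ "(x0, x1)"]) (use assms in auto)
qed

lemma hnorm_nonneg:
  assumes w: "holder_space \<Omega> k \<alpha> w" and "infinite \<Omega>"
  shows "0 \<le> hnorm \<Omega> k \<alpha> w"
proof -
  obtain x0 where "x0 \<in> \<Omega>"
    using infinite_imp_nonempty[OF \<open>infinite \<Omega>\<close>] by blast
  moreover obtain x1 where "x1 \<in> \<Omega> - {x0}"
    using infinite_imp_nonempty[of "\<Omega> - {x0}"] \<open>infinite \<Omega>\<close> by auto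
  ultimately have x: "x0 \<in> \<Omega>" "x1 \<in> \<Omega>" "x0 \<noteq> x1" by auto
  have "0 \<le> supnorm \<Omega> (mpart \<beta> w)" if \<beta>: "\<beta> \<in> mindices j" and "j \<le> k" for \<beta> j
  proof -
    obtain bs where "mpart \<beta> w = dpart bs w" "set bs \<subseteq> Basis" "length bs = j"
      using mpart_eq_dpart[OF \<beta>] by blast
    with w \<open>j \<le> k\<close> x(1) show ?thesis unfolding holder_space_def by (auto intro: supnorm_nonneg)
  qed
  moreover have "0 \<le> hseminorm \<Omega> \<alpha> (mpart \<beta> w)" if \<beta>: "\<beta> \<in> mindices k" for \<beta>
  proof -
    obtain bs where "mpart \<beta> w = dpart bs w" "set bs \<subseteq> Basis" "length bs = k"
      using mpart_eq_dpart[OF \<beta>] by blast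
    with w x show ?thesis unfolding holder_space_def by (metis hseminorm_nonneg)
  qed
  ultimately show ?thesis
    unfolding hnorm_def by (intro add_nonneg_nonneg sum_nonneg) auto
qed

lemma schauder_constant_bound:
  assumes "schauder_constant \<Omega> \<alpha> \<Lambda>" "holder_space \<Omega> 0 \<alpha> g" "dirichlet_solution \<Omega> \<alpha> g v"
    and "infinite \<Omega>" and "hnorm \<Omega> 0 \<alpha> g \<le> B"
  shows "hnorm \<Omega> 2 \<alpha> v \<le> \<bar>\<Lambda>\<bar> * B"
proof -
  have "hnorm \<Omega> 2 \<alpha> v \<le> \<Lambda> * hnorm \<Omega> 0 \<alpha> g"
    using assms(1-3) unfolding schauder_constant_def by blast
  also have "\<dots> \<le> \<bar>\<Lambda>\<bar> * hnorm \<Omega> 0 \<alpha> g"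
    using hnorm_nonneg[OF assms(2,4)] by (simp add: mult_right_mono)
  also have "\<dots> \<le> \<bar>\<Lambda>\<bar> * B"
    using assms(5) by (simp add: mult_left_mono)
  finally show ?thesis .
qed

lemma dirichlet_iteration_holder_space:
  assumes "dirichlet_iteration \<Omega> \<alpha> f \<phi> u" "holder_space \<Omega> 2 \<alpha> \<phi>"
  shows "holder_space \<Omega> 2 \<alpha> (u i)"
  using assms unfolding dirichlet_iteration_def dirichlet_solution_def by (cases i) auto

theorem mainTheorem6:
  fixes \<Omega> :: "'a::euclidean_space set" and \<alpha> \<Lambda> :: real
    and f :: "'a \<Rightarrow> real \<Rightarrow> 'a \<Rightarrow> real" and u :: "nat \<Rightarrow> 'a \<Rightarrow> real"
    and \<psi> :: "real \<Rightarrow> real"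
  assumes "bounded_smooth_domain \<Omega>"
    and "0 < \<alpha>" and "\<alpha> < 1"
    and "schauder_constant \<Omega> \<alpha> \<Lambda>"
    and "dirichlet_iteration \<Omega> \<alpha> f (\<lambda>x. 0) u"
    and "bounded (\<psi> ` {0..})" and "mono_on {0..} \<psi>"
    and "\<forall>w. holder_space \<Omega> 2 \<alpha> w \<longrightarrow>
           holder_space \<Omega> 0 \<alpha> (\<lambda>x. f x (w x) (grad w x)) \<and>
           hnorm \<Omega> 0 \<alpha> (\<lambda>x. f x (w x) (grad w x)) \<le> \<psi> (hnorm \<Omega> 1 \<alpha> w)"
    and "\<exists>t\<ge>0. \<Lambda> * \<psi> t = t"
  shows "\<exists>M. \<forall>i. hnorm \<Omega> 2 \<alpha> (u i) \<le> M"
proof -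
  have "infinite \<Omega>" "bounded \<Omega>"
    using assms(1) finite_imp_not_open unfolding bounded_smooth_domain_def by auto
  obtain B where "\<forall>y\<in>\<psi> ` {0..}. \<bar>y\<bar> \<le> B"
    using assms(6) unfolding bounded_iff by auto
  then have B: "\<psi> t \<le> B" if "0 \<le> t" for t
    using that by force
  have u: "holder_space \<Omega> 2 \<alpha> (u i)" for i
    using dirichlet_iteration_holder_space[OF assms(5) holder_space_zero] .
  have "hnorm \<Omega> 2 \<alpha> (u (Suc i)) \<le> \<bar>\<Lambda>\<bar> * B" for i
  proof (rule schauder_constant_bound[OF assms(4) _ _ \<open>infinite \<Omega>\<close>])
    have "holder_space \<Omega> 1 \<alpha> (u i)"
      using holder_space_2_imp_1[OF bounded_smooth_domain_locally_quasiconvex[OF assms(1)]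
          \<open>bounded \<Omega>\<close> _ _ u] assms(2,3) by simp
    then have "0 \<le> hnorm \<Omega> 1 \<alpha> (u i)" using hnorm_nonneg \<open>infinite \<Omega>\<close> by blast
    then show "hnorm \<Omega> 0 \<alpha> (\<lambda>x. f x (u i x) (grad (u i) x)) \<le> B"
      using assms(8) u B order_trans by meson
  qed (use assms(5,8) u in \<open>auto simp: dirichlet_iteration_def\<close>)
  then have "hnorm \<Omega> 2 \<alpha> (u i) \<le> max (hnorm \<Omega> 2 \<alpha> (u 0)) (\<bar>\<Lambda>\<bar> * B)" for i
    by (cases i) (auto simp: le_max_iff_disj)
  then show ?thesis by blast
qed

end
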